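(* Let $P_+$ denote the group of piecewise linear homeomorphisms $f:\mathbb{R}\to\mathbb{R}$ such that $f(0)=0$, the set of slopes of $f$ is bounded, and $f$ is the identity near $-\infty$. Let $f\in P_+$ with $\sup_{t\in\mathbb{R}}|f(t)-t|=\infty$. Then there exists a strictly monotone divergent sequence $\{b_n\}$ of real numbers such that at least one of the following holds: (1) $b_n\to+\infty$, $b_{n+1}>3f(b_n)$ for all $n$, and $f(b_n)-b_n\to+\infty$; (2) $b_n\to+\infty$, $b_{n+1}>3f^{-1}(b_n)$ for all $n$, and $f^{-1}(b_n)-b_n\to+\infty$.
   Context: For a piecewise linear homeomorphism $f$ of $\mathbb{R}$, its set of slopes is $\Lambda(f)=\{f'(t): t\in\mathbb{R}\setminus B(f)\}$, where $B(f)$ is the set of break points (points where $f$ is not differentiable). A set $\Lambda\subset\mathbb{R}\setminus\{0\}$ is bounded if there is $M>1$ with $M^{-1}<|\lambda|<M$ for all $\lambda\in\Lambda$. "$f$ is the identity near $-\infty$" means there is $c\in\mathbb{R}$ with $f(t)=t$ for all $t\le c$. The hypothesis $\sup_t|f(t)-t|=\infty$ is equivalent to $[f]\neq[\mathrm{id}]$ in the group $QI(\mathbb{R})$ of quasi-isometries modulo bounded distance. *)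

theory Defs
  imports "HOL-Analysis.Analysis"
begin

definition break_points :: "(real \<Rightarrow> real) \<Rightarrow> real set" where
  "break_points f = {t. \<not> f differentiable (at t)}"

definition pl_homeo :: "(real \<Rightarrow> real) \<Rightarrow> bool" where
  "pl_homeo f \<longleftrightarrow>
     (\<exists>g. homeomorphism UNIV UNIV f g) \<and>
     (\<forall>a b. finite (break_points f \<inter> {a..b})) \<and>
     (\<forall>t. t \<notin> break_points f \<longrightarrow>
        (\<exists>e>0. \<exists>m c. \<forall>s\<in>ball t e. f s = m * s + c))"

definition slopes :: "(real \<Rightarrow> real) \<Rightarrow> real set" where
  "slopes f = {deriv f t | t. t \<notin> break_points f}"

definition bounded_slopes :: "real set \<Rightarrow> bool" where
  "bounded_slopes S \<longleftrightarrow> (\<exists>M>1. \<forall>x\<in>S. inverse M < \<bar>x\<bar> \<and> \<bar>x\<bar> < M)"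

definition id_near_minus_infty :: "(real \<Rightarrow> real) \<Rightarrow> bool" where
  "id_near_minus_infty f \<longleftrightarrow> (\<exists>c. \<forall>t\<le>c. f t = t)"

definition P_plus :: "(real \<Rightarrow> real) set" where
  "P_plus = {f. pl_homeo f \<and> f 0 = 0 \<and> bounded_slopes (slopes f) \<and> id_near_minus_infty f}"

end

theory Submission
  imports Defs
begin

text \<open>Only the topology of f enters: f is a homeomorphism of the line that is the identity
  near minus infinity. Since f(t) - t is unbounded, either f - id or f^-1 - id is unbounded
  above (a lower bound for f - id is an upper bound for f^-1 - id and vice versa). A
  continuous function that is bounded above near minus infinity and unbounded above exceeds
  every bound arbitrarily far to the right, so the sequence b can be chosen greedily, each term
  beyond the growth threshold set by its predecessor.\<close>

lemma continuous_unbounded_above_far_right: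
  fixes d :: "real \<Rightarrow> real"
  assumes cont: "continuous_on UNIV d"
    and left: "bdd_above (d ` {..c})"
    and unbounded: "\<not> bdd_above (range d)"
  shows "\<exists>t>K. d t > N"
proof (rule ccontr)
  assume "\<not> (\<exists>t>K. d t > N)"
  then have "\<forall>y\<in>d ` {K<..}. y \<le> N"
    by (force simp: not_less)
  then have right: "bdd_above (d ` {K<..})"
    by (auto simp: bdd_above_def)
  have "compact (d ` {c..K})"
    by (intro compact_continuous_image continuous_on_subset[OF cont]) auto
  then have middle: "bdd_above (d ` {c..K})"
    by (simp add: bounded_imp_bdd_above compact_imp_bounded)
  have "range d \<subseteq> d ` ({..c} \<union> {c..K} \<union> {K<..})"
    by (intro image_mono) auto
  then show False
    using unbounded left middle right bdd_above_mono by (metis bdd_above_Un image_Un)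
qed

lemma escaping_sequence_exists:
  fixes d F :: "real \<Rightarrow> real"
  assumes escape: "\<And>K N. \<exists>t>K. d t > N"
  shows "\<exists>b :: nat \<Rightarrow> real. strict_mono b \<and> filterlim b at_top sequentially \<and>
           (\<forall>n. b (Suc n) > F (b n)) \<and> filterlim (\<lambda>n. d (b n)) at_top sequentially"
proof -
  obtain pick where pick: "\<And>K N. pick K N > K \<and> d (pick K N) > N"
    using escape by metis
  define b where "b = rec_nat (pick 0 0) (\<lambda>n x. pick (max (F x) (x + 1)) (real (Suc n)))"
  have b_0: "b 0 = pick 0 0"
    and b_Suc: "b (Suc n) = pick (max (F (b n)) (b n + 1)) (real (Suc n))" for n
    by (simp_all add: b_def)
  have step: "b (Suc n) > b n + 1" and grows: "b (Suc n) > F (b n)" for n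
    using pick[of "max (F (b n)) (b n + 1)" "real (Suc n)"] by (auto simp: b_Suc)
  have d_b: "d (b n) > real n" for n
    using pick by (cases n) (auto simp: b_0 b_Suc)
  have b_ge: "b n \<ge> real n" for n
  proof (induction n)
    case 0
    then show ?case using pick[of 0 0] by (simp add: b_0)
  next
    case (Suc n)
    then show ?case using step[of n] by simp
  qed
  have "strict_mono b"
    using step by (simp add: strict_mono_Suc_iff) (meson less_add_one less_trans)
  moreover have "filterlim b at_top sequentially"
    by (rule filterlim_at_top_mono[OF filterlim_real_sequentially]) (use b_ge in auto)
  moreover have "filterlim (\<lambda>n. d (b n)) at_top sequentially"
    by (rule filterlim_at_top_mono[OF filterlim_real_sequentially])
      (use d_b in \<open>auto intro!: always_eventually less_imp_le\<close>)
  ultimately show ?thesis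
    using grows by blast
qed

lemma displacement_escaping_sequence:
  fixes h F :: "real \<Rightarrow> real"
  assumes cont: "continuous_on UNIV h"
    and "id_near_minus_infty h"
    and unbounded: "\<not> bdd_above (range (\<lambda>t. h t - t))"
  shows "\<exists>b :: nat \<Rightarrow> real. strict_mono b \<and> filterlim b at_top sequentially \<and>
           (\<forall>n. b (Suc n) > F (b n)) \<and> filterlim (\<lambda>n. h (b n) - b n) at_top sequentially"
proof -
  obtain c where "\<forall>t\<le>c. h t = t"
    using assms(2) by (auto simp: id_near_minus_infty_def)
  then have left: "bdd_above ((\<lambda>t. h t - t) ` {..c})"
    by (auto simp: bdd_above_def)
  have "continuous_on UNIV (\<lambda>t. h t - t)"
    by (intro continuous_intros cont)
  then have "\<exists>t>K. h t - t > N" for K N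
    using left unbounded by (rule continuous_unbounded_above_far_right)
  then show ?thesis
    by (rule escaping_sequence_exists)
qed

lemma P_plus_homeomorphism_inv:
  assumes "f \<in> P_plus"
  shows "homeomorphism UNIV UNIV f (inv f)"
proof -
  obtain g where hom: "homeomorphism UNIV UNIV f g"
    using assms by (auto simp: P_plus_def pl_homeo_def)
  have "inv f = g"
    using homeomorphism_apply1[OF hom] homeomorphism_apply2[OF hom] by (intro inv_equality) auto
  then show ?thesis
    using hom by simp
qed

lemma id_near_minus_infty_inverse:
  assumes "\<And>x. g (f x) = x" and "id_near_minus_infty f"
  shows "id_near_minus_infty g"
  using assms by (metis id_near_minus_infty_def)

lemma displacement_unbounded_above_inverse:
  fixes f g :: "real \<Rightarrow> real"
  assumes inverse: "\<And>x. g (f x) = x"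
    and unbounded: "\<not> (\<exists>C. \<forall>t. \<bar>f t - t\<bar> \<le> C)"
    and "bdd_above (range (\<lambda>t. f t - t))"
  shows "\<not> bdd_above (range (\<lambda>t. g t - t))"
proof
  assume "bdd_above (range (\<lambda>t. g t - t))"
  then obtain C2 where "g (f t) - f t \<le> C2" for t
    by (auto simp: bdd_above_def)
  then have lower: "t - f t \<le> C2" for t
    using inverse by metis
  obtain C1 where "f t - t \<le> C1" for t
    using assms(3) by (auto simp: bdd_above_def)
  with lower have "\<bar>f t - t\<bar> \<le> max C1 C2" for t
    by (smt (verit))
  with unbounded show False
    by blast
qed

theorem lemma3p1:
  fixes f :: "real \<Rightarrow> real"
  assumes "f \<in> P_plus"
    and "\<not> (\<exists>C. \<forall>t. \<bar>f t - t\<bar> \<le> C)"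
  shows "\<exists>b :: nat \<Rightarrow> real.
           (strict_mono b \<or> (\<forall>m n. m < n \<longrightarrow> b n < b m)) \<and>
           ((filterlim b at_top sequentially \<and> (\<forall>n. b (Suc n) > 3 * f (b n)) \<and>
               filterlim (\<lambda>n. f (b n) - b n) at_top sequentially)
            \<or>
            (filterlim b at_top sequentially \<and> (\<forall>n. b (Suc n) > 3 * inv f (b n)) \<and>
               filterlim (\<lambda>n. inv f (b n) - b n) at_top sequentially))"
proof -
  have hom: "homeomorphism UNIV UNIV f (inv f)"
    using assms(1) by (rule P_plus_homeomorphism_inv)
  have inverse: "inv f (f x) = x" for x
    using hom by (simp add: homeomorphism_apply1)
  have id_near: "id_near_minus_infty f"
    using assms(1) by (simp add: P_plus_def)
  show ?thesis
  proof (cases "bdd_above (range (\<lambda>t. f t - t))")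
    case True
    then have "\<not> bdd_above (range (\<lambda>t. inv f t - t))"
      using displacement_unbounded_above_inverse inverse assms(2) by blast
    from displacement_escaping_sequence[where F = "\<lambda>x. 3 * inv f x",
        OF homeomorphism_cont2[OF hom] id_near_minus_infty_inverse[OF inverse id_near] this]
    show ?thesis
      by blast
  next
    case False
    from displacement_escaping_sequence[where F = "\<lambda>x. 3 * f x",
        OF homeomorphism_cont1[OF hom] id_near False]
    show ?thesis
      by blast
  qed
qed

end
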